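(* Let $\Omega\subset\mathbb{R}^d$ be a bounded Lipschitz domain, $\epsilon>0$, and let $\Omega_1,\dots,\Omega_n\subset\Omega$ be pairwise disjoint cells of equal measure $A>0$. Set $\phi_i = A^{-1/2}\chi_{\Omega_i}$ ($\chi_{\Omega_i}$ the characteristic function) and $X=\mathrm{span}\{\phi_1,\dots,\phi_n\}\subset L^2(\Omega)$. Let $\mathsf{K_h}:X\to L^2(\partial\Omega)$, $f\mapsto u|_{\partial\Omega}$, where $u\in H^1(\Omega)$ is the weak solution of $-\Delta u+\epsilon u = f$ in $\Omega$, $\partial u/\partial\mathbf{n}=0$ on $\partial\Omega$. Assume $\mathsf{K_h}\phi_i\neq c\,\mathsf{K_h}\phi_j$ for all $i\neq j$, $c\in\mathbb{R}$. Let $\mathsf{P}$ be the $L^2$-orthogonal projection of $X$ onto $\mathcal{N}(\mathsf{K_h})^\perp$, $\mathsf{P}^{\mathcal N}=I-\mathsf{P}$, and $\mathsf{W}\phi_i=\|\mathsf{P}\phi_i\|_{L^2(\Omega)}\phi_i$. Fix $j$, let $x_j^*$ be the minimum norm least squares solution of $\mathsf{K_h}x=\mathsf{K_h}\phi_j$, and choose arbitrary points $z_i\in\Omega_i$, $i=1,\dots,n$. Then $$\mathsf{W}^{-1}x_j^* = A^{1/2}\sum_{i=1}^n\frac{(\mathsf{P}\phi_j)(z_i)}{\|\mathsf{P}\phi_i\|_{L^2(\Omega)}}\,\phi_i = A^{1/2}\frac{A^{-1/2}-(\mathsf{P}^{\mathcal N}\phi_j)(z_j)}{\sqrt{1-\|\mathsf{P}^{\mathcal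 N}\phi_j\|^2_{L^2(\Omega)}}}\,\phi_j - A^{1/2}\sum_{i\neq j}\frac{(\mathsf{P}^{\mathcal N}\phi_j)(z_i)}{\sqrt{1-\|\mathsf{P}^{\mathcal N}\phi_i\|^2_{L^2(\Omega)}}}\,\phi_i,$$ and for every $i\neq j$, $$\frac{(\mathsf{P}\phi_j)(z_j)}{\|\mathsf{P}\phi_j\|_{L^2(\Omega)}} > \frac{(\mathsf{P}\phi_j)(z_i)}{\|\mathsf{P}\phi_i\|_{L^2(\Omega)}},\qquad \frac{A^{-1/2}-(\mathsf{P}^{\mathcal N}\phi_j)(z_j)}{\sqrt{1-\|\mathsf{P}^{\mathcal N}\phi_j\|^2_{L^2(\Omega)}}} > \frac{-(\mathsf{P}^{\mathcal N}\phi_j)(z_i)}{\sqrt{1-\|\mathsf{P}^{\mathcal N}\phi_i\|^2_{L^2(\Omega)}}}.$$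
   Context: Elements of $X$ are piecewise constant, constant on each $\Omega_i$, so point values $(\mathsf{P}\phi_j)(z_i)$ are well defined. $\mathcal{N}(\mathsf{K_h})$ is the nullspace of $\mathsf{K_h}$; $\mathbf{n}$ is the outward unit normal. The minimum norm least squares solution of $\mathsf{K_h}x=b$ is $\mathsf{K_h}^\dagger b$ with $\mathsf{K_h}^\dagger$ the Moore–Penrose inverse. *)

theory Defs
  imports "HOL-Analysis.Analysis"
begin

definition lipschitz_domain :: "(real^'d) set \<Rightarrow> bool" where
  "lipschitz_domain \<Omega> \<longleftrightarrow> \<Omega> \<noteq> {} \<and> open \<Omega> \<and> bounded \<Omega> \<and> connected \<Omega> \<and>
     (\<forall>p \<in> frontier \<Omega>. \<exists>r>0. \<exists>e::real^'d. \<exists>g::real^'d \<Rightarrow> real. \<exists>L.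
        norm e = 1 \<and> (\<forall>x y. \<bar>g x - g y\<bar> \<le> L * norm (x - y)) \<and>
        \<Omega> \<inter> ball p r = {x \<in> ball p r. x \<bullet> e < g (x - (x \<bullet> e) *\<^sub>R e)})"

definition L2ip :: "(real^'d) set \<Rightarrow> (real^'d \<Rightarrow> real) \<Rightarrow> (real^'d \<Rightarrow> real) \<Rightarrow> real" where
  "L2ip \<Omega> f g = (LINT x : \<Omega> | lebesgue. f x * g x)"

definition L2norm :: "(real^'d) set \<Rightarrow> (real^'d \<Rightarrow> real) \<Rightarrow> real" where
  "L2norm \<Omega> f = sqrt (L2ip \<Omega> f f)"

definition cellfun :: "real \<Rightarrow> (nat \<Rightarrow> (real^'d) set) \<Rightarrow> nat \<Rightarrow> real^'d \<Rightarrow> real" where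
  "cellfun A cells i = (\<lambda>x. (1 / sqrt A) * indicator (cells i) x)"

definition cellspan :: "real \<Rightarrow> (nat \<Rightarrow> (real^'d) set) \<Rightarrow> nat \<Rightarrow> (real^'d \<Rightarrow> real) set" where
  "cellspan A cells n = {f. \<exists>c::nat \<Rightarrow> real. f = (\<lambda>x. \<Sum>i<n. c i * cellfun A cells i x)}"

definition nullsp :: "(real^'d \<Rightarrow> real) set \<Rightarrow> ((real^'d \<Rightarrow> real) \<Rightarrow> 'b::real_vector)
   \<Rightarrow> (real^'d \<Rightarrow> real) set" where
  "nullsp X K = {x \<in> X. K x = 0}"

definition projP :: "(real^'d) set \<Rightarrow> (real^'d \<Rightarrow> real) set \<Rightarrow> ((real^'d \<Rightarrow> real) \<Rightarrow> 'b::real_vector)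
   \<Rightarrow> (real^'d \<Rightarrow> real) \<Rightarrow> (real^'d \<Rightarrow> real)" where
  "projP \<Omega> X K x = (THE y. y \<in> X \<and> (\<forall>z \<in> nullsp X K. L2ip \<Omega> y z = 0) \<and> (\<lambda>p. x p - y p) \<in> nullsp X K)"

definition projPN :: "(real^'d) set \<Rightarrow> (real^'d \<Rightarrow> real) set \<Rightarrow> ((real^'d \<Rightarrow> real) \<Rightarrow> 'b::real_vector)
   \<Rightarrow> (real^'d \<Rightarrow> real) \<Rightarrow> (real^'d \<Rightarrow> real)" where
  "projPN \<Omega> X K x = (\<lambda>p. x p - projP \<Omega> X K x p)"

text \<open>Weighting operator W, the linear map on X with W \<phi>_i = ||P \<phi>_i|| \<phi>_i
  (coefficients w.r.t. the orthonormal basis \<phi>_i are L^2 inner products).\<close>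
definition weightW :: "(real^'d) set \<Rightarrow> real \<Rightarrow> (nat \<Rightarrow> (real^'d) set) \<Rightarrow> nat
   \<Rightarrow> (real^'d \<Rightarrow> real) set \<Rightarrow> ((real^'d \<Rightarrow> real) \<Rightarrow> 'b::real_vector)
   \<Rightarrow> (real^'d \<Rightarrow> real) \<Rightarrow> (real^'d \<Rightarrow> real)" where
  "weightW \<Omega> A cells n X K x = (\<lambda>p.
     \<Sum>i<n. (L2ip \<Omega> x (cellfun A cells i) * L2norm \<Omega> (projP \<Omega> X K (cellfun A cells i)))
              * cellfun A cells i p)"

definition is_mnls :: "(real^'d) set \<Rightarrow> (real^'d \<Rightarrow> real) set \<Rightarrow> ((real^'d \<Rightarrow> real) \<Rightarrow> 'b::real_normed_vector)
   \<Rightarrow> 'b \<Rightarrow> (real^'d \<Rightarrow> real) \<Rightarrow> bool" where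
  "is_mnls \<Omega> X K b x \<longleftrightarrow> x \<in> X \<and> (\<forall>y \<in> X. norm (K x - b) \<le> norm (K y - b)) \<and>
     (\<forall>y \<in> X. (\<forall>w \<in> X. norm (K y - b) \<le> norm (K w - b)) \<longrightarrow> L2norm \<Omega> x \<le> L2norm \<Omega> y)"

end

theory Submission
  imports Defs
begin

text \<open>
  The cells are disjoint of measure \<open>A\<close>, so the \<open>\<phi>\<^sub>i\<close> form an orthonormal basis of \<open>X\<close> and
  \<open>X\<close> is isometric to \<open>\<real>\<^sup>n\<close> through coefficient vectors. The statement is then finite
  dimensional linear algebra: only the linearity of \<open>K\<close> on \<open>X\<close> matters, not the boundary value
  problem behind \<open>K\<close> nor the regularity of \<open>\<Omega>\<close>.

  In coefficients, \<open>P\<close> is the orthogonal projection onto the orthogonal complement of the kernel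
  of \<open>c \<mapsto> \<Sum> c\<^sub>i K \<phi>\<^sub>i\<close>, which exists by a Gram-Schmidt induction, and by Pythagoras
  \<open>P \<phi>\<^sub>j\<close> is the minimum norm least squares solution of \<open>K x = K \<phi>\<^sub>j\<close>. The coefficients of
  \<open>P \<phi>\<^sub>j\<close> are the Gram entries \<open>\<langle>P \<phi>\<^sub>j, \<phi>\<^sub>i\<rangle> = \<langle>P \<phi>\<^sub>j, P \<phi>\<^sub>i\<rangle>\<close>, and since \<open>P \<phi>\<^sub>j\<close> is constant
  on \<open>\<Omega>\<^sub>i\<close> its value at \<open>z\<^sub>i\<close> is \<open>A\<^sup>-\<^sup>1\<^sup>/\<^sup>2 \<langle>P \<phi>\<^sub>j, P \<phi>\<^sub>i\<rangle>\<close>. This gives the formula for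
  \<open>W\<^sup>-\<^sup>1 x\<^sub>j\<^sup>*\<close>; the identity \<open>\<parallel>P \<phi>\<^sub>i\<parallel>\<^sup>2 + \<parallel>P\<^sup>N \<phi>\<^sub>i\<parallel>\<^sup>2 = 1\<close> turns it into the second form. The
  inequalities are the strict Cauchy-Schwarz inequality \<open>\<langle>P \<phi>\<^sub>j, P \<phi>\<^sub>i\<rangle> < \<parallel>P \<phi>\<^sub>j\<parallel> \<parallel>P \<phi>\<^sub>i\<parallel>\<close>:
  equality would make \<open>P \<phi>\<^sub>j\<close> and \<open>P \<phi>\<^sub>i\<close> parallel, hence also \<open>K \<phi>\<^sub>j = K (P \<phi>\<^sub>j)\<close> and \<open>K \<phi>\<^sub>i\<close>.
\<close>

section \<open>The coefficient space\<close>

definition coeff_inner :: "nat \<Rightarrow> (nat \<Rightarrow> real) \<Rightarrow> (nat \<Rightarrow> real) \<Rightarrow> real" where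
  "coeff_inner n c d = (\<Sum>i<n. c i * d i)"

definition unit_coeff :: "nat \<Rightarrow> nat \<Rightarrow> real" where
  "unit_coeff i k = (if k = i then 1 else 0)"

lemma coeff_inner_commute: "coeff_inner n c d = coeff_inner n d c"
  unfolding coeff_inner_def by (simp add: mult.commute)

lemma coeff_inner_cong:
  "(\<And>i. i < n \<Longrightarrow> c i = c' i) \<Longrightarrow> (\<And>i. i < n \<Longrightarrow> d i = d' i) \<Longrightarrow>
    coeff_inner n c d = coeff_inner n c' d'"
  unfolding coeff_inner_def by (rule sum.cong) auto

lemma coeff_inner_diff_left:
  "coeff_inner n (\<lambda>i. c i - d i) e = coeff_inner n c e - coeff_inner n d e"
  unfolding coeff_inner_def by (simp add: algebra_simps sum_subtractf)

lemma coeff_inner_diff_right: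
  "coeff_inner n e (\<lambda>i. c i - d i) = coeff_inner n e c - coeff_inner n e d"
  unfolding coeff_inner_def by (simp add: algebra_simps sum_subtractf)

lemma coeff_inner_scale_left: "coeff_inner n (\<lambda>i. a * c i) e = a * coeff_inner n c e"
  unfolding coeff_inner_def by (simp add: algebra_simps sum_distrib_left)

lemma coeff_inner_sum_left:
  "coeff_inner n (\<lambda>i. \<Sum>l<m. a l * w l i) e = (\<Sum>l<m. a l * coeff_inner n (w l) e)"
  unfolding coeff_inner_def
  by (simp add: sum_distrib_left sum_distrib_right mult.assoc sum.swap[of _ "{..<n}"])

lemma coeff_inner_unit_right: "i < n \<Longrightarrow> coeff_inner n c (unit_coeff i) = c i"
  unfolding coeff_inner_def unit_coeff_def by (simp add: if_distrib cong: if_cong)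

lemma coeff_inner_self_nonneg: "coeff_inner n c c \<ge> 0"
  unfolding coeff_inner_def by (simp add: sum_nonneg)

lemma coeff_inner_self_eq_0_iff: "coeff_inner n c c = 0 \<longleftrightarrow> (\<forall>i<n. c i = 0)"
  unfolding coeff_inner_def by (subst sum_nonneg_eq_0_iff) auto

lemma coeff_inner_Pythagoras:
  assumes "coeff_inner n p (\<lambda>i. c i - p i) = 0"
  shows "coeff_inner n c c = coeff_inner n p p + coeff_inner n (\<lambda>i. c i - p i) (\<lambda>i. c i - p i)"
proof -
  have "coeff_inner n c c = (\<Sum>i<n. p i * p i + (c i - p i) * (c i - p i) + 2 * (p i * (c i - p i)))"
    unfolding coeff_inner_def by (rule sum.cong) (auto simp: algebra_simps)
  with assms show ?thesis
    unfolding coeff_inner_def by (simp add: sum.distrib sum_distrib_left[symmetric])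
qed

lemma coeff_inner_less_Cauchy_Schwarz:
  fixes n :: nat and u v :: "nat \<Rightarrow> real"
  defines "a \<equiv> sqrt (coeff_inner n u u)" and "b \<equiv> sqrt (coeff_inner n v v)"
  assumes not_parallel: "\<not> (\<forall>k<n. b * u k = a * v k)"
  shows "coeff_inner n u v < a * b"
proof (rule ccontr)
  assume "\<not> coeff_inner n u v < a * b"
  have "coeff_inner n (\<lambda>k. b * u k - a * v k) (\<lambda>k. b * u k - a * v k)
      = b\<^sup>2 * coeff_inner n u u - 2 * a * b * coeff_inner n u v + a\<^sup>2 * coeff_inner n v v"
    unfolding coeff_inner_def
    by (simp add: algebra_simps power2_eq_square sum.distrib sum_subtractf sum_distrib_left)
  also have "\<dots> = 2 * (a * b) * (a * b - coeff_inner n u v)"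
    using coeff_inner_self_nonneg[of n u] coeff_inner_self_nonneg[of n v]
    by (simp add: a_def b_def algebra_simps power2_eq_square)
  also have "\<dots> \<le> 0"
    using \<open>\<not> coeff_inner n u v < a * b\<close>
    by (intro mult_nonneg_nonpos) (simp_all add: a_def b_def coeff_inner_self_nonneg)
  finally have "\<forall>k<n. b * u k - a * v k = 0"
    using coeff_inner_self_nonneg coeff_inner_self_eq_0_iff by (metis order_antisym)
  with not_parallel show False by auto
qed

text \<open>Gram-Schmidt: the induction step corrects the projection along the part \<open>r\<close> of \<open>w\<^sub>m\<close>
  orthogonal to the earlier vectors; if \<open>r\<close> has norm zero it vanishes and needs no correction.\<close>

lemma coeff_projection_exists:
  fixes w :: "nat \<Rightarrow> nat \<Rightarrow> real"
  shows "\<exists>a. \<forall>k<m. coeff_inner n (\<lambda>i. x i - (\<Sum>l<m. a l * w l i)) (w k) = 0"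
proof (induction m arbitrary: x)
  case 0
  show ?case by simp
next
  case (Suc m)
  obtain a where a: "\<forall>k<m. coeff_inner n (\<lambda>i. x i - (\<Sum>l<m. a l * w l i)) (w k) = 0"
    using Suc.IH by blast
  obtain b where b: "\<forall>k<m. coeff_inner n (\<lambda>i. w m i - (\<Sum>l<m. b l * w l i)) (w k) = 0"
    using Suc.IH by blast
  define u where "u = (\<lambda>i. x i - (\<Sum>l<m. a l * w l i))"
  define r where "r = (\<lambda>i. w m i - (\<Sum>l<m. b l * w l i))"
  define t where "t = coeff_inner n u r / coeff_inner n r r"
  define e where "e = (\<lambda>i. u i - t * r i)"
  have e_orth_w: "coeff_inner n e (w k) = 0" if "k < m" for k
    using a b that by (simp add: e_def coeff_inner_diff_left coeff_inner_scale_left u_def r_def)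
  have e_orth_r: "coeff_inner n e r = 0"
  proof (cases "coeff_inner n r r = 0")
    case True
    then have "coeff_inner n e r = coeff_inner n e (\<lambda>_. 0)"
      by (intro coeff_inner_cong) (simp_all add: coeff_inner_self_eq_0_iff)
    then show ?thesis by (simp add: coeff_inner_def)
  next
    case False
    have "coeff_inner n e r = coeff_inner n u r - t * coeff_inner n r r"
      by (simp add: e_def coeff_inner_diff_left coeff_inner_scale_left)
    with False show ?thesis by (simp add: t_def)
  qed
  have "coeff_inner n (w m) e = coeff_inner n r e + (\<Sum>l<m. b l * coeff_inner n (w l) e)"
    by (simp add: r_def coeff_inner_diff_left coeff_inner_sum_left)
  also have "\<dots> = 0"
    using e_orth_r e_orth_w by (simp add: coeff_inner_commute)
  finally have e_orth_wm: "coeff_inner n e (w m) = 0"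
    by (simp add: coeff_inner_commute)
  define a' where "a' = (\<lambda>l. a l - t * b l)(m := t)"
  have "(\<lambda>i. x i - (\<Sum>l<Suc m. a' l * w l i)) = e"
    by (simp add: a'_def e_def u_def r_def algebra_simps sum_subtractf sum_distrib_left)
  with e_orth_w e_orth_wm show ?case
    by (metis less_Suc_eq)
qed


section \<open>Functions constant on the cells\<close>

locale equal_cells =
  fixes \<Omega> :: "(real^'d) set" and cells :: "nat \<Rightarrow> (real^'d) set" and n :: nat and A :: real
  assumes cells_sub: "\<forall>i<n. cells i \<subseteq> \<Omega>"
    and cells_meas: "\<forall>i<n. cells i \<in> sets lebesgue \<and> measure lebesgue (cells i) = A"
    and cells_disj: "\<forall>i<n. \<forall>k<n. i \<noteq> k \<longrightarrow> cells i \<inter> cells k = {}"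
    and A_pos: "A > 0"
begin

abbreviation "\<phi> \<equiv> cellfun A cells"
abbreviation "X \<equiv> cellspan A cells n"

definition cellcomb :: "(nat \<Rightarrow> real) \<Rightarrow> real^'d \<Rightarrow> real" where
  "cellcomb c = (\<lambda>x. \<Sum>i<n. c i * \<phi> i x)"

lemma cellfun_at:
  assumes "i < n" "k < n" "x \<in> cells k"
  shows "\<phi> i x = (if i = k then 1 / sqrt A else 0)"
proof -
  have "i \<noteq> k \<Longrightarrow> x \<notin> cells i"
    using assms cells_disj by blast
  with assms show ?thesis by (auto simp: cellfun_def)
qed

lemma cellcomb_at:
  assumes "k < n" "x \<in> cells k"
  shows "cellcomb c x = c k / sqrt A"
  using assms by (simp add: cellcomb_def cellfun_at if_distrib cong: if_cong)

lemma cellcomb_outside: "\<forall>k<n. x \<notin> cells k \<Longrightarrow> cellcomb c x = 0"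
  by (simp add: cellcomb_def cellfun_def)

lemma mem_cellspan_iff: "f \<in> X \<longleftrightarrow> (\<exists>c. f = cellcomb c)"
  by (simp add: cellspan_def cellcomb_def)

lemma cellcomb_in_cellspan [simp]: "cellcomb c \<in> X"
  using mem_cellspan_iff by blast

lemma cellcomb_eq_iff: "cellcomb c = cellcomb d \<longleftrightarrow> (\<forall>i<n. c i = d i)"
proof
  assume eq: "cellcomb c = cellcomb d"
  show "\<forall>i<n. c i = d i"
  proof (intro allI impI)
    fix i
    assume "i < n"
    then have "cells i \<noteq> {}"
      using cells_meas A_pos by force
    then obtain x where "x \<in> cells i" by blast
    with \<open>i < n\<close> eq have "c i / sqrt A = d i / sqrt A"
      by (metis cellcomb_at)
    with A_pos show "c i = d i" by simp
  qed
qed (simp add: cellcomb_def)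

lemma cellcomb_lincomb:
  "(\<lambda>x. a * cellcomb c x + b * cellcomb d x) = cellcomb (\<lambda>i. a * c i + b * d i)"
  by (simp add: cellcomb_def algebra_simps sum.distrib sum_distrib_left)

lemma cellcomb_diff: "(\<lambda>x. cellcomb c x - cellcomb d x) = cellcomb (\<lambda>i. c i - d i)"
  by (simp add: cellcomb_def algebra_simps sum_subtractf)

lemma cellfun_eq_cellcomb: "i < n \<Longrightarrow> \<phi> i = cellcomb (unit_coeff i)"
  by (rule ext) (simp add: cellcomb_def unit_coeff_def if_distrib[where f="\<lambda>t. t * _"] cong: if_cong)

lemma cellfun_in_cellspan: "i < n \<Longrightarrow> \<phi> i \<in> X"
  by (simp add: cellfun_eq_cellcomb)

lemma cellcomb_product:
  "indicator \<Omega> x * (cellcomb c x * cellcomb d x) = (\<Sum>i<n. (c i * d i / A) * indicator (cells i) x)"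
proof (cases "\<exists>k<n. x \<in> cells k")
  case True
  then obtain k where k: "k < n" "x \<in> cells k" by blast
  then have "x \<in> \<Omega>" using cells_sub by blast
  have "(\<Sum>i<n. (c i * d i / A) * indicator (cells i) x) = (\<Sum>i<n. if i = k then c k * d k / A else 0)"
    using k cells_disj by (intro sum.cong) (auto simp: indicator_def)
  with k \<open>x \<in> \<Omega>\<close> A_pos show ?thesis
    by (simp add: cellcomb_at)
next
  case False
  then show ?thesis by (simp add: cellcomb_outside)
qed

lemma L2ip_cellcomb: "L2ip \<Omega> (cellcomb c) (cellcomb d) = coeff_inner n c d"
proof -
  have finite_cell: "emeasure lebesgue (cells i) < \<infinity>" if "i < n" for i
    using that cells_meas A_pos measure_zero_top by (fastforce simp: less_top[symmetric])
  have "L2ip \<Omega> (cellcomb c) (cellcomb d)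
      = integral\<^sup>L lebesgue (\<lambda>x. \<Sum>i<n. (c i * d i / A) * indicator (cells i) x)"
    by (simp add: L2ip_def set_lebesgue_integral_def cellcomb_product)
  also have "\<dots> = (\<Sum>i<n. integral\<^sup>L lebesgue (\<lambda>x. (c i * d i / A) * indicator (cells i) x))"
    using cells_meas finite_cell by (intro Bochner_Integration.integral_sum) auto
  also have "\<dots> = (\<Sum>i<n. (c i * d i / A) * measure lebesgue (cells i))"
    by simp
  also have "\<dots> = coeff_inner n c d"
    using cells_meas A_pos by (simp add: coeff_inner_def)
  finally show ?thesis .
qed

lemma L2norm_cellcomb: "L2norm \<Omega> (cellcomb c) = sqrt (coeff_inner n c c)"
  by (simp add: L2norm_def L2ip_cellcomb)

lemma L2ip_cellcomb_cellfun: "i < n \<Longrightarrow> L2ip \<Omega> (cellcomb c) (\<phi> i) = c i"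
  by (simp add: cellfun_eq_cellcomb L2ip_cellcomb coeff_inner_unit_right)

end

section \<open>The projection onto the complement of the kernel\<close>

locale cell_operator = equal_cells \<Omega> cells n A
  for \<Omega> :: "(real^'d) set" and cells n A +
  fixes K :: "(real^'d \<Rightarrow> real) \<Rightarrow> 'b::real_inner"
  assumes K_lin: "\<forall>x\<in>cellspan A cells n. \<forall>y\<in>cellspan A cells n. \<forall>a b.
    K (\<lambda>p. a * x p + b * y p) = a *\<^sub>R K x + b *\<^sub>R K y"
begin

abbreviation "P \<equiv> projP \<Omega> X K"
abbreviation "PN \<equiv> projPN \<Omega> X K"
abbreviation "W \<equiv> weightW \<Omega> A cells n X K"

lemma K_cellcomb_lincomb:
  "K (cellcomb (\<lambda>i. a * c i + b * d i)) = a *\<^sub>R K (cellcomb c) + b *\<^sub>R K (cellcomb d)"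
  using K_lin by (simp flip: cellcomb_lincomb)

lemma K_cellcomb_diff: "K (cellcomb (\<lambda>i. c i - d i)) = K (cellcomb c) - K (cellcomb d)"
  using K_cellcomb_lincomb[of 1 c "-1" d] by simp

lemma K_cellcomb_scale: "K (cellcomb (\<lambda>i. a * c i)) = a *\<^sub>R K (cellcomb c)"
  using K_cellcomb_lincomb[of a c 0 c] by simp

lemma K_cellcomb: "K (cellcomb c) = (\<Sum>i<n. c i *\<^sub>R K (\<phi> i))"
proof -
  \<comment> \<open>Partial sums are written as truncated combinations, so that they stay in the domain \<open>X\<close> of
    linearity of \<open>K\<close>.\<close>
  have "K (cellcomb (\<lambda>i. if i < m then c i else 0)) = (\<Sum>i<m. c i *\<^sub>R K (\<phi> i))" if "m \<le> n" for m
    using that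
  proof (induction m)
    case 0
    show ?case using K_cellcomb_lincomb[of 0 _ 0 _] by simp
  next
    case (Suc m)
    then have "m < n" by simp
    have "cellcomb (\<lambda>i. if i < Suc m then c i else 0)
        = cellcomb (\<lambda>i. 1 * (if i < m then c i else 0) + c m * unit_coeff m i)"
      by (auto simp: cellcomb_eq_iff unit_coeff_def less_Suc_eq)
    then have "K (cellcomb (\<lambda>i. if i < Suc m then c i else 0))
        = 1 *\<^sub>R K (cellcomb (\<lambda>i. if i < m then c i else 0)) + c m *\<^sub>R K (\<phi> m)"
      by (simp only: K_cellcomb_lincomb cellfun_eq_cellcomb[OF \<open>m < n\<close>])
    with Suc show ?case by simp
  qed
  from this[of n] show ?thesis
    by (simp add: cellcomb_eq_iff[of "\<lambda>i. if i < n then c i else 0" c, THEN iffD2])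
qed

lemma K_cellcomb_eq_0_iff:
  "K (cellcomb c) = 0 \<longleftrightarrow> (\<forall>k<n. coeff_inner n c (\<lambda>i. K (\<phi> i) \<bullet> K (\<phi> k)) = 0)"
proof -
  have inner_K: "coeff_inner n c (\<lambda>i. K (\<phi> i) \<bullet> K (\<phi> k)) = K (cellcomb c) \<bullet> K (\<phi> k)" for k
    by (simp add: K_cellcomb coeff_inner_def inner_sum_left)
  show ?thesis
  proof
    assume "\<forall>k<n. coeff_inner n c (\<lambda>i. K (\<phi> i) \<bullet> K (\<phi> k)) = 0"
    then have "K (cellcomb c) \<bullet> K (cellcomb c) = 0"
      by (simp add: inner_K K_cellcomb inner_sum_right)
    then show "K (cellcomb c) = 0" by simp
  qed (simp add: inner_K)
qed

lemma projP_cellcomb_eqI: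
  assumes residual: "K (cellcomb (\<lambda>i. c i - q i)) = 0"
    and orth: "\<forall>e. K (cellcomb e) = 0 \<longrightarrow> coeff_inner n q e = 0"
  shows "P (cellcomb c) = cellcomb q"
  unfolding projP_def
proof (rule the_equality)
  show "cellcomb q \<in> X \<and> (\<forall>w \<in> nullsp X K. L2ip \<Omega> (cellcomb q) w = 0) \<and>
      (\<lambda>p. cellcomb c p - cellcomb q p) \<in> nullsp X K"
    using residual orth by (auto simp: nullsp_def mem_cellspan_iff L2ip_cellcomb cellcomb_diff)
next
  fix y
  assume y: "y \<in> X \<and> (\<forall>w \<in> nullsp X K. L2ip \<Omega> y w = 0) \<and> (\<lambda>p. cellcomb c p - y p) \<in> nullsp X K"
  then obtain d where d: "y = cellcomb d"
    by (auto simp: mem_cellspan_iff)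
  have "K (cellcomb (\<lambda>i. c i - d i)) = 0"
    using y by (simp add: d nullsp_def cellcomb_diff)
  with residual have null: "K (cellcomb (\<lambda>i. q i - d i)) = 0"
    by (simp add: K_cellcomb_diff)
  then have "cellcomb (\<lambda>i. q i - d i) \<in> nullsp X K"
    by (simp add: nullsp_def)
  then have "L2ip \<Omega> y (cellcomb (\<lambda>i. q i - d i)) = 0"
    using y by blast
  then have "coeff_inner n d (\<lambda>i. q i - d i) = 0"
    by (simp add: d L2ip_cellcomb)
  moreover have "coeff_inner n q (\<lambda>i. q i - d i) = 0"
    using orth null by blast
  ultimately have "coeff_inner n (\<lambda>i. q i - d i) (\<lambda>i. q i - d i) = 0"
    by (simp add: coeff_inner_diff_left)
  then show "y = cellcomb q"
    by (simp add: d cellcomb_eq_iff coeff_inner_self_eq_0_iff)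
qed

lemma projP_cellcomb_exists:
  "\<exists>q. K (cellcomb (\<lambda>i. c i - q i)) = 0 \<and> (\<forall>e. K (cellcomb e) = 0 \<longrightarrow> coeff_inner n q e = 0)"
proof -
  define g where "g k = (\<lambda>i. K (\<phi> i) \<bullet> K (\<phi> k))" for k
  obtain a where a: "\<forall>k<n. coeff_inner n (\<lambda>i. c i - (\<Sum>l<n. a l * g l i)) (g k) = 0"
    using coeff_projection_exists by blast
  define q where "q = (\<lambda>i. \<Sum>l<n. a l * g l i)"
  have "K (cellcomb (\<lambda>i. c i - q i)) = 0"
    using a by (simp add: K_cellcomb_eq_0_iff q_def g_def)
  moreover have "coeff_inner n q e = 0" if "K (cellcomb e) = 0" for e
  proof -
    have "coeff_inner n (g l) e = 0" if "l < n" for l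
      using \<open>K (cellcomb e) = 0\<close> that by (simp add: K_cellcomb_eq_0_iff coeff_inner_commute g_def)
    then show ?thesis by (simp add: q_def coeff_inner_sum_left)
  qed
  ultimately show ?thesis by blast
qed

definition proj_coeff :: "nat \<Rightarrow> nat \<Rightarrow> real" where
  "proj_coeff j i = L2ip \<Omega> (P (\<phi> j)) (\<phi> i)"

lemma projP_cellfun:
  assumes "j < n"
  shows "P (\<phi> j) = cellcomb (proj_coeff j)"
    and "K (cellcomb (proj_coeff j)) = K (\<phi> j)"
    and "\<forall>e. K (cellcomb e) = 0 \<longrightarrow> coeff_inner n (proj_coeff j) e = 0"
proof -
  obtain q where residual: "K (cellcomb (\<lambda>i. unit_coeff j i - q i)) = 0"
    and orth: "\<forall>e. K (cellcomb e) = 0 \<longrightarrow> coeff_inner n q e = 0"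
    using projP_cellcomb_exists by blast
  have Pq: "P (\<phi> j) = cellcomb q"
    using projP_cellcomb_eqI[OF residual orth] assms by (simp add: cellfun_eq_cellcomb)
  then have coeff_eq: "\<forall>i<n. proj_coeff j i = q i"
    by (simp add: proj_coeff_def L2ip_cellcomb_cellfun)
  then have "cellcomb (proj_coeff j) = cellcomb q"
    by (simp add: cellcomb_eq_iff)
  with Pq residual assms show "P (\<phi> j) = cellcomb (proj_coeff j)"
    and "K (cellcomb (proj_coeff j)) = K (\<phi> j)"
    by (simp_all add: K_cellcomb_diff cellfun_eq_cellcomb)
  show "\<forall>e. K (cellcomb e) = 0 \<longrightarrow> coeff_inner n (proj_coeff j) e = 0"
    using orth coeff_eq by (metis coeff_inner_cong)
qed

lemma proj_coeff_Gram:
  assumes "i < n" "j < n"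
  shows "coeff_inner n (proj_coeff j) (proj_coeff i) = proj_coeff j i"
proof -
  have "K (cellcomb (\<lambda>k. unit_coeff i k - proj_coeff i k)) = 0"
    using assms by (simp add: K_cellcomb_diff projP_cellfun(2) cellfun_eq_cellcomb)
  then have "coeff_inner n (proj_coeff j) (\<lambda>k. unit_coeff i k - proj_coeff i k) = 0"
    using projP_cellfun(3)[OF \<open>j < n\<close>] by blast
  with assms show ?thesis
    by (simp add: coeff_inner_diff_right coeff_inner_unit_right)
qed

lemma L2norm_projP_cellfun: "i < n \<Longrightarrow> L2norm \<Omega> (P (\<phi> i)) = sqrt (proj_coeff i i)"
  by (simp add: projP_cellfun(1) L2norm_cellcomb proj_coeff_Gram)

lemma proj_coeff_self_nonneg: "i < n \<Longrightarrow> proj_coeff i i \<ge> 0"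
  by (metis proj_coeff_Gram coeff_inner_self_nonneg)

lemma L2norm_projP_cellfun_pos:
  assumes "i < n" "K (\<phi> i) \<noteq> 0"
  shows "L2norm \<Omega> (P (\<phi> i)) > 0"
proof -
  have "\<not> (\<forall>k<n. proj_coeff i k = 0)"
  proof
    assume "\<forall>k<n. proj_coeff i k = 0"
    then have "cellcomb (proj_coeff i) = cellcomb (\<lambda>_. 0)"
      by (simp add: cellcomb_eq_iff)
    then have "K (\<phi> i) = K (cellcomb (\<lambda>_. 0))"
      using projP_cellfun(2)[OF \<open>i < n\<close>] by simp
    also have "\<dots> = 0"
      using K_cellcomb[of "\<lambda>_. 0"] by simp
    finally show False
      using assms(2) by contradiction
  qed
  then have "proj_coeff i i \<noteq> 0"
    using proj_coeff_Gram[OF assms(1) assms(1)] coeff_inner_self_eq_0_iff by metis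
  with assms(1) show ?thesis
    using proj_coeff_self_nonneg by (simp add: L2norm_projP_cellfun order_le_neq_trans)
qed

lemma projP_projPN_Pythagoras:
  assumes "i < n"
  shows "(L2norm \<Omega> (P (\<phi> i)))\<^sup>2 + (L2norm \<Omega> (PN (\<phi> i)))\<^sup>2 = 1"
proof -
  let ?p = "proj_coeff i" and ?r = "\<lambda>k. unit_coeff i k - proj_coeff i k"
  have PN: "PN (\<phi> i) = cellcomb ?r"
    unfolding projPN_def projP_cellfun(1)[OF assms]
    using assms by (simp add: cellfun_eq_cellcomb cellcomb_diff)
  have "K (cellcomb ?r) = 0"
    using assms by (simp add: K_cellcomb_diff projP_cellfun(2) cellfun_eq_cellcomb)
  then have "coeff_inner n ?p ?r = 0"
    using projP_cellfun(3)[OF assms] by blast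
  then have "coeff_inner n (unit_coeff i) (unit_coeff i) = coeff_inner n ?p ?p + coeff_inner n ?r ?r"
    by (rule coeff_inner_Pythagoras)
  moreover have "coeff_inner n (unit_coeff i) (unit_coeff i) = 1"
    using assms by (simp add: coeff_inner_unit_right unit_coeff_def)
  ultimately show ?thesis
    using assms coeff_inner_self_nonneg
    by (simp add: PN projP_cellfun(1) L2norm_cellcomb)
qed

lemma projP_cellfun_at:
  "j < n \<Longrightarrow> i < n \<Longrightarrow> x \<in> cells i \<Longrightarrow> P (\<phi> j) x = proj_coeff j i / sqrt A"
  by (simp add: projP_cellfun(1) cellcomb_at)

lemma projPN_cellfun_quotient:
  assumes "i < n" "j < n" "x \<in> cells i"
  shows "((if i = j then 1 / sqrt A else 0) - PN (\<phi> j) x) / sqrt (1 - (L2norm \<Omega> (PN (\<phi> i)))\<^sup>2)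
    = P (\<phi> j) x / L2norm \<Omega> (P (\<phi> i))"
proof -
  have "1 - (L2norm \<Omega> (PN (\<phi> i)))\<^sup>2 = (L2norm \<Omega> (P (\<phi> i)))\<^sup>2"
    using projP_projPN_Pythagoras[OF assms(1)] by simp
  then have "sqrt (1 - (L2norm \<Omega> (PN (\<phi> i)))\<^sup>2) = L2norm \<Omega> (P (\<phi> i))"
    using assms(1) proj_coeff_self_nonneg by (simp add: L2norm_projP_cellfun)
  with assms show ?thesis
    by (simp add: projPN_def cellfun_at)
qed

lemma least_squares_cellfun_iff:
  assumes "j < n" "x \<in> X"
  shows "(\<forall>y\<in>X. norm (K x - K (\<phi> j)) \<le> norm (K y - K (\<phi> j))) \<longleftrightarrow> K x = K (\<phi> j)"
  using assms cellfun_in_cellspan[OF assms(1)] by fastforce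

lemma is_mnls_cellfun_iff:
  assumes j: "j < n"
  shows "is_mnls \<Omega> X K (K (\<phi> j)) x \<longleftrightarrow> x = P (\<phi> j)"
proof -
  let ?p = "proj_coeff j"
  have split: "coeff_inner n c c = coeff_inner n ?p ?p + coeff_inner n (\<lambda>i. c i - ?p i) (\<lambda>i. c i - ?p i)"
    if "K (cellcomb c) = K (\<phi> j)" for c
  proof (rule coeff_inner_Pythagoras)
    have "K (cellcomb (\<lambda>i. c i - ?p i)) = 0"
      using that j by (simp add: K_cellcomb_diff projP_cellfun(2))
    then show "coeff_inner n ?p (\<lambda>i. c i - ?p i) = 0"
      using projP_cellfun(3)[OF j] by blast
  qed
  have Pj: "P (\<phi> j) = cellcomb ?p" "K (cellcomb ?p) = K (\<phi> j)"
    using projP_cellfun[OF j] by simp_all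
  have "is_mnls \<Omega> X K (K (\<phi> j)) x \<longleftrightarrow>
      x \<in> X \<and> K x = K (\<phi> j) \<and> (\<forall>y\<in>X. K y = K (\<phi> j) \<longrightarrow> L2norm \<Omega> x \<le> L2norm \<Omega> y)"
    unfolding is_mnls_def using least_squares_cellfun_iff[OF j] by blast
  also have "\<dots> \<longleftrightarrow> x = P (\<phi> j)"
  proof
    assume x: "x \<in> X \<and> K x = K (\<phi> j) \<and> (\<forall>y\<in>X. K y = K (\<phi> j) \<longrightarrow> L2norm \<Omega> x \<le> L2norm \<Omega> y)"
    then obtain c where c: "x = cellcomb c"
      by (auto simp: mem_cellspan_iff)
    have "L2norm \<Omega> x \<le> L2norm \<Omega> (cellcomb ?p)"
      using x Pj(2) cellcomb_in_cellspan by blast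
    then have "coeff_inner n c c \<le> coeff_inner n ?p ?p"
      by (simp add: c L2norm_cellcomb)
    moreover have "K (cellcomb c) = K (\<phi> j)"
      using x c by simp
    ultimately have "coeff_inner n (\<lambda>i. c i - ?p i) (\<lambda>i. c i - ?p i) = 0"
      using split coeff_inner_self_nonneg[of n "\<lambda>i. c i - ?p i"] by fastforce
    then show "x = P (\<phi> j)"
      by (simp add: c Pj cellcomb_eq_iff coeff_inner_self_eq_0_iff)
  next
    assume "x = P (\<phi> j)"
    moreover have "L2norm \<Omega> (cellcomb ?p) \<le> L2norm \<Omega> (cellcomb d)" if "K (cellcomb d) = K (\<phi> j)" for d
      using split[OF that] coeff_inner_self_nonneg by (simp add: L2norm_cellcomb)
    ultimately show "x \<in> X \<and> K x = K (\<phi> j) \<and> (\<forall>y\<in>X. K y = K (\<phi> j) \<longrightarrow> L2norm \<Omega> x \<le> L2norm \<Omega> y)"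
      using Pj by (auto simp: mem_cellspan_iff)
  qed
  finally show ?thesis .
qed

lemma weightW_cellcomb: "W (cellcomb c) = cellcomb (\<lambda>i. c i * L2norm \<Omega> (P (\<phi> i)))"
  unfolding weightW_def by (simp add: L2ip_cellcomb_cellfun, simp add: cellcomb_def)

lemma the_inv_into_weightW:
  assumes "\<forall>i<n. K (\<phi> i) \<noteq> 0"
  shows "the_inv_into X W (cellcomb (\<lambda>i. c i * L2norm \<Omega> (P (\<phi> i)))) = cellcomb c"
proof -
  have "inj_on W X"
  proof (rule inj_onI)
    fix x y
    assume "x \<in> X" "y \<in> X" "W x = W y"
    then obtain a b where ab: "x = cellcomb a" "y = cellcomb b"
      by (auto simp: mem_cellspan_iff)
    with \<open>W x = W y\<close> have "\<forall>i<n. a i * L2norm \<Omega> (P (\<phi> i)) = b i * L2norm \<Omega> (P (\<phi> i))"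
      by (simp add: weightW_cellcomb cellcomb_eq_iff)
    with assms L2norm_projP_cellfun_pos show "x = y"
      by (simp add: ab cellcomb_eq_iff) (metis less_irrefl)
  qed
  then show ?thesis
    using the_inv_into_f_f[of W X "cellcomb c"] by (simp add: weightW_cellcomb)
qed

lemma the_inv_into_weightW_projP_cellfun:
  assumes "j < n" "\<forall>i<n. K (\<phi> i) \<noteq> 0" "\<forall>i<n. z i \<in> cells i"
  shows "the_inv_into X W (P (\<phi> j))
    = (\<lambda>p. sqrt A * (\<Sum>i<n. (P (\<phi> j) (z i) / L2norm \<Omega> (P (\<phi> i))) * \<phi> i p))"
proof -
  let ?c = "\<lambda>i. proj_coeff j i / L2norm \<Omega> (P (\<phi> i))"
  have "\<forall>i<n. L2norm \<Omega> (P (\<phi> i)) \<noteq> 0"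
    using assms(2) L2norm_projP_cellfun_pos by (metis less_irrefl)
  then have "P (\<phi> j) = cellcomb (\<lambda>i. ?c i * L2norm \<Omega> (P (\<phi> i)))"
    unfolding projP_cellfun(1)[OF assms(1)] cellcomb_eq_iff by simp
  then have "the_inv_into X W (P (\<phi> j)) = cellcomb ?c"
    by (simp only: the_inv_into_weightW[OF assms(2)])
  also have "\<dots> = (\<lambda>p. sqrt A * (\<Sum>i<n. (P (\<phi> j) (z i) / L2norm \<Omega> (P (\<phi> i))) * \<phi> i p))"
    using assms A_pos by (simp add: cellcomb_def projP_cellfun_at sum_distrib_left)
  finally show ?thesis .
qed

lemma projP_expansion_eq_projPN_expansion:
  assumes j: "j < n" and z: "\<forall>i<n. z i \<in> cells i"
  shows "(\<lambda>p. sqrt A * (\<Sum>i<n. (P (\<phi> j) (z i) / L2norm \<Omega> (P (\<phi> i))) * \<phi> i p)) =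
    (\<lambda>p. sqrt A * (((1 / sqrt A - PN (\<phi> j) (z j)) / sqrt (1 - (L2norm \<Omega> (PN (\<phi> j)))\<^sup>2)) * \<phi> j p)
      - sqrt A * (\<Sum>i\<in>{..<n} - {j}. (PN (\<phi> j) (z i) / sqrt (1 - (L2norm \<Omega> (PN (\<phi> i)))\<^sup>2)) * \<phi> i p))"
proof -
  have "(\<Sum>i\<in>{..<n} - {j}. (P (\<phi> j) (z i) / L2norm \<Omega> (P (\<phi> i))) * \<phi> i p)
      = (\<Sum>i\<in>{..<n} - {j}. - (PN (\<phi> j) (z i) / sqrt (1 - (L2norm \<Omega> (PN (\<phi> i)))\<^sup>2)) * \<phi> i p)" for p
  proof (rule sum.cong[OF refl])
    fix i
    assume "i \<in> {..<n} - {j}"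
    then have "- (PN (\<phi> j) (z i) / sqrt (1 - (L2norm \<Omega> (PN (\<phi> i)))\<^sup>2))
        = P (\<phi> j) (z i) / L2norm \<Omega> (P (\<phi> i))"
      using projPN_cellfun_quotient[of i j "z i"] j z by simp
    then show "(P (\<phi> j) (z i) / L2norm \<Omega> (P (\<phi> i))) * \<phi> i p
        = - (PN (\<phi> j) (z i) / sqrt (1 - (L2norm \<Omega> (PN (\<phi> i)))\<^sup>2)) * \<phi> i p"
      by simp
  qed
  with j z projPN_cellfun_quotient[OF j j, of "z j"] show ?thesis
    by (simp add: sum.remove[of "{..<n}" j] sum_negf right_diff_distrib)
qed

lemma projP_cellfun_peak:
  assumes "i < n" "j < n" "K (\<phi> i) \<noteq> 0"
    and not_parallel: "\<forall>c. K (\<phi> j) \<noteq> c *\<^sub>R K (\<phi> i)"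
    and "x \<in> cells i" "y \<in> cells j"
  shows "P (\<phi> j) x / L2norm \<Omega> (P (\<phi> i)) < P (\<phi> j) y / L2norm \<Omega> (P (\<phi> j))"
proof -
  define a where "a = L2norm \<Omega> (P (\<phi> j))"
  define b where "b = L2norm \<Omega> (P (\<phi> i))"
  have "K (\<phi> j) \<noteq> 0"
    using not_parallel[rule_format, of 0] by simp
  then have "a > 0" "b > 0"
    using assms L2norm_projP_cellfun_pos by (simp_all add: a_def b_def)
  have "\<not> (\<forall>k<n. b * proj_coeff j k = a * proj_coeff i k)"
  proof
    assume "\<forall>k<n. b * proj_coeff j k = a * proj_coeff i k"
    then have "cellcomb (\<lambda>k. b * proj_coeff j k) = cellcomb (\<lambda>k. a * proj_coeff i k)"
      by (simp add: cellcomb_eq_iff)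
    then have "b *\<^sub>R K (cellcomb (proj_coeff j)) = a *\<^sub>R K (cellcomb (proj_coeff i))"
      by (metis K_cellcomb_scale)
    then have "b *\<^sub>R K (\<phi> j) = a *\<^sub>R K (\<phi> i)"
      using assms by (simp add: projP_cellfun(2))
    moreover have "K (\<phi> j) = inverse b *\<^sub>R (b *\<^sub>R K (\<phi> j))"
      using \<open>b > 0\<close> by simp
    ultimately have "K (\<phi> j) = (a / b) *\<^sub>R K (\<phi> i)"
      by (simp add: divide_inverse_commute)
    with not_parallel show False by blast
  qed
  moreover have "a = sqrt (coeff_inner n (proj_coeff j) (proj_coeff j))"
    and "b = sqrt (coeff_inner n (proj_coeff i) (proj_coeff i))"
    using assms by (simp_all add: a_def b_def L2norm_projP_cellfun proj_coeff_Gram)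
  ultimately have "coeff_inner n (proj_coeff j) (proj_coeff i) < a * b"
    using coeff_inner_less_Cauchy_Schwarz by simp
  then have "proj_coeff j i < a * b"
    using assms by (simp add: proj_coeff_Gram)
  then have "proj_coeff j i / (sqrt A * b) < a / sqrt A"
    using \<open>b > 0\<close> A_pos by (simp add: field_simps)
  moreover have "proj_coeff j j = a * a"
    using assms proj_coeff_self_nonneg by (simp add: a_def L2norm_projP_cellfun)
  ultimately show ?thesis
    using assms \<open>a > 0\<close> by (simp add: projP_cellfun_at a_def[symmetric] b_def[symmetric])
qed

end

theorem mainTheorem5:
  fixes \<Omega> :: "(real^'d) set" and cells :: "nat \<Rightarrow> (real^'d) set" and n :: nat and A :: real
    and K :: "(real^'d \<Rightarrow> real) \<Rightarrow> 'b::real_inner" and j :: nat and z :: "nat \<Rightarrow> real^'d"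
  defines "\<phi> \<equiv> cellfun A cells"
  defines "X \<equiv> cellspan A cells n"
  defines "P \<equiv> projP \<Omega> X K"
  defines "PN \<equiv> projPN \<Omega> X K"
  defines "W \<equiv> weightW \<Omega> A cells n X K"
  assumes dom: "lipschitz_domain \<Omega>"
    and cells_sub: "\<forall>i<n. cells i \<subseteq> \<Omega>"
    and cells_meas: "\<forall>i<n. cells i \<in> sets lebesgue \<and> measure lebesgue (cells i) = A"
    and cells_disj: "\<forall>i<n. \<forall>k<n. i \<noteq> k \<longrightarrow> cells i \<inter> cells k = {}"
    and A_pos: "A > 0"
    and K_lin: "\<forall>x\<in>X. \<forall>y\<in>X. \<forall>a b. K (\<lambda>p. a * x p + b * y p) = a *\<^sub>R K x + b *\<^sub>R K y"
    and K_nonpar: "\<forall>i<n. \<forall>k<n. i \<noteq> k \<longrightarrow> (\<forall>c::real. K (\<phi> i) \<noteq> c *\<^sub>R K (\<phi> k))"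
    and K_nz: "\<forall>i<n. K (\<phi> i) \<noteq> 0"
    and j: "j < n"
    and z: "\<forall>i<n. z i \<in> cells i"
  shows "(\<exists>!x. is_mnls \<Omega> X K (K (\<phi> j)) x) \<and>
    (\<forall>xs. is_mnls \<Omega> X K (K (\<phi> j)) xs \<longrightarrow>
       the_inv_into X W xs =
         (\<lambda>p. sqrt A * (\<Sum>i<n. (P (\<phi> j) (z i) / L2norm \<Omega> (P (\<phi> i))) * \<phi> i p)) \<and>
       (\<lambda>p. sqrt A * (\<Sum>i<n. (P (\<phi> j) (z i) / L2norm \<Omega> (P (\<phi> i))) * \<phi> i p)) =
         (\<lambda>p. sqrt A * (((1 / sqrt A - PN (\<phi> j) (z j)) / sqrt (1 - (L2norm \<Omega> (PN (\<phi> j)))\<^sup>2)) * \<phi> j p)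
         - sqrt A * (\<Sum>i\<in>{..<n} - {j}.
              (PN (\<phi> j) (z i) / sqrt (1 - (L2norm \<Omega> (PN (\<phi> i)))\<^sup>2)) * \<phi> i p))) \<and>
    (\<forall>i<n. i \<noteq> j \<longrightarrow>
       P (\<phi> j) (z j) / L2norm \<Omega> (P (\<phi> j)) > P (\<phi> j) (z i) / L2norm \<Omega> (P (\<phi> i)) \<and>
       (1 / sqrt A - PN (\<phi> j) (z j)) / sqrt (1 - (L2norm \<Omega> (PN (\<phi> j)))\<^sup>2)
         > - PN (\<phi> j) (z i) / sqrt (1 - (L2norm \<Omega> (PN (\<phi> i)))\<^sup>2))"
proof -
  interpret cell_operator \<Omega> cells n A K
    by unfold_locales (use cells_sub cells_meas cells_disj A_pos K_lin in \<open>simp_all add: X_def\<close>)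
  note defs = \<phi>_def X_def P_def PN_def W_def
  have nonzero: "\<forall>i<n. K (cellfun A cells i) \<noteq> 0"
    using K_nz by (simp add: \<phi>_def)
  have peak: "P (\<phi> j) (z j) / L2norm \<Omega> (P (\<phi> j)) > P (\<phi> j) (z i) / L2norm \<Omega> (P (\<phi> i)) \<and>
      (1 / sqrt A - PN (\<phi> j) (z j)) / sqrt (1 - (L2norm \<Omega> (PN (\<phi> j)))\<^sup>2)
        > - PN (\<phi> j) (z i) / sqrt (1 - (L2norm \<Omega> (PN (\<phi> i)))\<^sup>2)" if "i < n" "i \<noteq> j" for i
    using projP_cellfun_peak[OF that(1) j] projPN_cellfun_quotient[OF j j]
      projPN_cellfun_quotient[OF that(1) j] K_nonpar K_nz z that j
    by (simp add: defs)
  show ?thesis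
    using the_inv_into_weightW_projP_cellfun[OF j nonzero z]
      projP_expansion_eq_projPN_expansion[OF j z] peak
    by (simp add: defs is_mnls_cellfun_iff[OF j])
qed

end
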